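(* Let $G$ be a finite group with $|G| = mp^k$, where $p$ is a prime, $k \geq 1$, and $m$ is a natural number such that $m/q < p < m$, where $q$ is the smallest prime divisor of $m$. Then a Sylow $p$-subgroup of $G$ is either normal in $G$ or self-normalizing in $G$. *)

theory Defs
  imports Complex_Main "HOL-Algebra.Group_Action" "HOL-Algebra.Sylow" "HOL-Computational_Algebra.Primes"
begin

definition sylow_subgroup :: "('a, 'b) monoid_scheme \<Rightarrow> nat \<Rightarrow> 'a set \<Rightarrow> bool" where
  "sylow_subgroup G p P \<longleftrightarrow> subgroup P G \<and> card P = p ^ multiplicity p (order G)"

end

theory Submission
  imports Defs "HOL-Algebra.Multiplicative_Group" "HOL-Algebra.Zassenhaus"
begin

text \<open>The conjugates of P are permuted by P, with P as the only fixed point, since a p-subgroup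
  normalizing a Sylow p-subgroup lies in it. Hence their number \<open>n\<^sub>p = [G : N(P)]\<close> is
  \<open>1\<close> modulo \<open>p\<close>. As \<open>n\<^sub>p \<cdot> [N(P) : P] = m < p q\<close>, either \<open>n\<^sub>p = 1\<close> and P is normal, or
  \<open>n\<^sub>p > p\<close>, and then \<open>[N(P) : P]\<close> is a divisor of \<open>m\<close> smaller than its least prime divisor
  \<open>q\<close>, hence \<open>1\<close>.\<close>

lemma dvd_less_least_prime_divisor_eq_1:
  fixes d m q :: nat
  assumes "d dvd m" and "m > 0" and "\<forall>r. prime r \<and> r dvd m \<longrightarrow> q \<le> r" and "d < q"
  shows "d = 1"
proof (rule ccontr)
  assume "d \<noteq> 1"
  then obtain r where r: "prime r" "r dvd d" using prime_factor_nat by blast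
  have "r \<le> d" using r assms(1,2) by (metis dvd_imp_le dvd_0_left_iff gr0I)
  moreover have "q \<le> r" using assms(1,3) r dvd_trans by blast
  ultimately show False using assms(4) by simp
qed

lemma dvd_prime_power_mod_prime:
  fixes p n k :: nat
  assumes "prime p" and "n dvd p ^ k"
  shows "n mod p = of_bool (n = 1)"
proof -
  obtain j where j: "n = p ^ j" using assms divides_primepow_nat by blast
  show ?thesis
  proof (cases j)
    case 0 then show ?thesis using j prime_gt_1_nat[OF assms(1)] by simp
  next
    case (Suc i) then show ?thesis using j prime_gt_1_nat[OF assms(1)] by simp
  qed
qed

lemma (in group) eq_one_if_pow_coprime_order:
  assumes "x \<in> carrier G" and "x [^] n = \<one>" and "coprime n (order G)"
  shows "x = \<one>"
proof -
  have "ord x dvd n" using assms(1,2) pow_eq_id by blast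
  moreover have "ord x dvd order G" using assms(1) ord_dvd_group_order by blast
  ultimately have "ord x = 1" using assms(3) coprime_common_divisor_nat by blast
  then show ?thesis using assms(1) ord_eq_1 by blast
qed

lemma (in group) pow_card_subgroup_eq_one:
  assumes "subgroup H G" and "x \<in> H"
  shows "x [^] card H = \<one>"
proof -
  interpret H: group "G\<lparr>carrier := H\<rparr>" using assms(1) subgroup_imp_group by blast
  have "x [^]\<^bsub>G\<lparr>carrier := H\<rparr>\<^esub> order (G\<lparr>carrier := H\<rparr>) = \<one>"
    using H.pow_order_eq_1 assms(2) by simp
  then show ?thesis by (simp add: order_def flip: nat_pow_consistent)
qed

lemma (in group) subset_sylow_if_subset_normalizer:
  assumes ord: "order G = m * p ^ k" and "p > 0" and "coprime p m"
    and P: "subgroup P G" "card P = p ^ j"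
    and Q: "subgroup Q G" "card Q = p ^ k"
    and PN: "P \<subseteq> normalizer G Q"
  shows "P \<subseteq> Q"
proof
  \<comment> \<open>The coset of x in N(Q)/Q has order dividing both p^j and |N(Q)/Q|, which divides m.\<close>
  fix x assume "x \<in> P"
  define N where "N = normalizer G Q"
  have "subgroup N G" unfolding N_def using normalizer_imp_subgroup Q(1) subgroup.subset by blast
  interpret N: group "G\<lparr>carrier := N\<rparr>" using \<open>subgroup N G\<close> subgroup_imp_group by blast
  interpret Q: normal Q "G\<lparr>carrier := N\<rparr>" unfolding N_def using subgroup_in_normalizer Q(1) .
  interpret F: group "G\<lparr>carrier := N\<rparr> Mod Q" by (rule Q.factorgroup_is_group)
  define c where "c = order (G\<lparr>carrier := N\<rparr> Mod Q)"
  have "c * p ^ k = card N"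
    using N.lagrange[OF Q.subgroup_axioms] Q(2) by (simp add: c_def order_def FactGroup_def)
  also have "card N dvd m * p ^ k" using lagrange[OF \<open>subgroup N G\<close>] ord by (metis dvd_triv_right)
  finally have "c dvd m" using \<open>p > 0\<close> by simp
  then have coprime: "coprime (p ^ j) c"
    using \<open>coprime p m\<close> coprime_divisors by (meson coprime_power_left_iff dvd_refl)
  have xN: "x \<in> N" using \<open>x \<in> P\<close> PN N_def by blast
  have hom: "(\<lambda>y. Q #>\<^bsub>G\<lparr>carrier := N\<rparr>\<^esub> y) \<in> hom (G\<lparr>carrier := N\<rparr>) (G\<lparr>carrier := N\<rparr> Mod Q)"
    by (rule Q.r_coset_hom_Mod)
  have "x [^] p ^ j = \<one>" using pow_card_subgroup_eq_one P \<open>x \<in> P\<close> by metis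
  then have "(Q #> x) [^]\<^bsub>G\<lparr>carrier := N\<rparr> Mod Q\<^esub> p ^ j = \<one>\<^bsub>G\<lparr>carrier := N\<rparr> Mod Q\<^esub>"
    using hom_nat_pow[OF hom, of x "p ^ j"] hom_one[OF hom] xN N.is_group F.is_group
    by (simp flip: nat_pow_consistent)
  moreover have "Q #> x \<in> carrier (G\<lparr>carrier := N\<rparr> Mod Q)"
    using xN unfolding FactGroup_def RCOSETS_def by auto
  ultimately have "Q #> x = Q"
    using F.eq_one_if_pow_coprime_order coprime c_def by (simp add: FactGroup_def)
  then show "x \<in> Q" using rcos_self \<open>x \<in> P\<close> P(1) Q(1) subgroup.subset by (metis subsetD)
qed

lemma (in group_action) orbit_eq_singleton_iff:
  assumes "x \<in> E"
  shows "orbit G \<phi> x = {x} \<longleftrightarrow> (\<forall>g\<in>carrier G. \<phi> g x = x)"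
  using orbit_refl[OF assms] unfolding orbit_def by auto

lemma (in group_action) card_invariant_subset_cong_fixed_points:
  assumes "finite E" and "order G = p ^ k" and "prime p"
    and "Y \<subseteq> E" and invariant: "\<And>g y. g \<in> carrier G \<Longrightarrow> y \<in> Y \<Longrightarrow> \<phi> g y \<in> Y"
  shows "card Y mod p = card {y \<in> Y. \<forall>g\<in>carrier G. \<phi> g y = y} mod p"
proof -
  \<comment> \<open>Y is the disjoint union of the orbits it contains; their sizes are powers of p, so
    modulo p only the one-point orbits count.\<close>
  define \<O> where "\<O> = {orb \<in> orbits G E \<phi>. orb \<subseteq> Y}"
  have orbit_in: "orbit G \<phi> y \<in> \<O>" if "y \<in> Y" for y
  proof -
    have "orbit G \<phi> y \<in> orbits G E \<phi>" using that \<open>Y \<subseteq> E\<close> unfolding orbits_def by blast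
    moreover have "orbit G \<phi> y \<subseteq> Y" using that invariant unfolding orbit_def by blast
    ultimately show ?thesis unfolding \<O>_def by blast
  qed
  have "Y = \<Union>\<O>"
  proof
    show "Y \<subseteq> \<Union>\<O>" using orbit_in orbit_refl \<open>Y \<subseteq> E\<close> by blast
    show "\<Union>\<O> \<subseteq> Y" unfolding \<O>_def by blast
  qed
  moreover have "pairwise disjnt \<O>"
    unfolding \<O>_def pairwise_def disjnt_def by (auto dest: disjoint_union)
  moreover have "finite Y" using \<open>finite E\<close> \<open>Y \<subseteq> E\<close> finite_subset by blast
  then have "finite orb" if "orb \<in> \<O>" for orb
    using that finite_subset unfolding \<O>_def by blast
  ultimately have "card Y = (\<Sum>orb\<in>\<O>. card orb)" by (simp add: card_Union_disjoint)
  moreover have "card orb mod p = of_bool (card orb = 1)" if orb: "orb \<in> \<O>" for orb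
  proof -
    obtain x where "x \<in> E" "orb = orbit G \<phi> x" using orb unfolding \<O>_def orbits_def by blast
    then have "card orb dvd p ^ k" using orbit_stabilizer_theorem assms(2) by (metis dvd_triv_left)
    then show ?thesis using dvd_prime_power_mod_prime \<open>prime p\<close> by blast
  qed
  ultimately have "card Y mod p = (\<Sum>orb\<in>\<O>. of_bool (card orb = 1)) mod p"
    by (metis (no_types, lifting) mod_sum_eq sum.cong)
  also have "(\<Sum>orb\<in>\<O>. of_bool (card orb = 1)) = card {orb \<in> \<O>. card orb = 1}"
  proof -
    have "finite \<O>" using \<open>finite Y\<close> unfolding \<O>_def by (simp add: finite_subset Pow_def)
    then show ?thesis by (simp add: Int_def conj_commute)
  qed
  also have "{orb \<in> \<O>. card orb = 1} = (\<lambda>y. {y}) ` {y \<in> Y. \<forall>g\<in>carrier G. \<phi> g y = y}"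
  proof (intro equalityI subsetI)
    fix orb assume "orb \<in> {orb \<in> \<O>. card orb = 1}"
    then obtain x where x: "x \<in> E" "orb = orbit G \<phi> x" "orb \<subseteq> Y" "card orb = 1"
      unfolding \<O>_def orbits_def by blast
    then have "orb = {x}" using orbit_refl by (metis card_1_singletonE singletonD)
    then show "orb \<in> (\<lambda>y. {y}) ` {y \<in> Y. \<forall>g\<in>carrier G. \<phi> g y = y}"
      using x orbit_eq_singleton_iff by blast
  next
    fix orb assume "orb \<in> (\<lambda>y. {y}) ` {y \<in> Y. \<forall>g\<in>carrier G. \<phi> g y = y}"
    then obtain y where y: "y \<in> Y" "\<forall>g\<in>carrier G. \<phi> g y = y" "orb = {y}" by blast
    then have "orbit G \<phi> y = orb" using orbit_eq_singleton_iff \<open>Y \<subseteq> E\<close> by blast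
    then show "orb \<in> {orb \<in> \<O>. card orb = 1}" using orbit_in[OF y(1)] y(3) by simp
  qed
  finally show ?thesis by (simp add: card_image)
qed

text \<open>The action of \<open>action_by_conjugation_on_power_set\<close>; by definition, \<open>normalizer G H\<close> is its
  stabilizer of \<open>H\<close>.\<close>

abbreviation conjugation :: "('a, 'b) monoid_scheme \<Rightarrow> 'a \<Rightarrow> 'a set \<Rightarrow> 'a set" where
  "conjugation G \<equiv> \<lambda>g. \<lambda>H \<in> {H. H \<subseteq> carrier G}. g <#\<^bsub>G\<^esub> H #>\<^bsub>G\<^esub> inv\<^bsub>G\<^esub> g"

lemma (in group) conjugate_subgroup:
  assumes "g \<in> carrier G" and "subgroup H G"
  shows "subgroup (conjugation G g H) G" and "card (conjugation G g H) = card H"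
proof -
  have H: "H \<subseteq> carrier G" using assms(2) subgroup.subset by blast
  then show "subgroup (conjugation G g H) G"
    using subgroup_conjugation_is_surj1[of "inv g" H] assms by simp
  have "conjugation G g H = (\<lambda>x. g \<otimes> x \<otimes> inv g) ` H"
    using assms(1) H unfolding l_coset_def r_coset_def by (auto simp: m_assoc)
  moreover have "inj_on (\<lambda>x. g \<otimes> x \<otimes> inv g) H"
    using assms(1) H conjugation_is_inj unfolding inj_on_def by blast
  ultimately show "card (conjugation G g H) = card H" by (simp add: card_image)
qed

lemma (in group) normal_if_conjugation_orbit_singleton:
  assumes "subgroup H G" and "orbit G (conjugation G) H = {H}"
  shows "H \<lhd> G"
proof (subst normal_inv_iff, intro conjI assms(1) ballI)
  fix x h assume "x \<in> carrier G" and "h \<in> H"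
  then have "x \<otimes> h \<otimes> inv x \<in> conjugation G x H"
    using assms(1) subgroup.subset unfolding l_coset_def r_coset_def by fastforce
  moreover have "conjugation G x H = H"
    using assms(2) \<open>x \<in> carrier G\<close> unfolding orbit_def by blast
  ultimately show "x \<otimes> h \<otimes> inv x \<in> H" by simp
qed

lemma (in group) subgroup_subset_normalizer:
  assumes "subgroup H G"
  shows "H \<subseteq> normalizer G H"
  using subgroup.subset[OF normal_imp_subgroup[OF subgroup_in_normalizer[OF assms]]] by simp

lemma (in group) card_conjugation_orbit_mult_card_normalizer:
  assumes "H \<subseteq> carrier G"
  shows "card (orbit G (conjugation G) H) * card (normalizer G H) = order G"
  using group_action.orbit_stabilizer_theorem[OF action_by_conjugation_on_power_set] assms
  unfolding normalizer_def by simp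

lemma (in group) card_sylow_conjugates_mod_prime:
  assumes fin: "finite (carrier G)" and ord: "order G = m * p ^ k" and "prime p" and "coprime p m"
    and P: "subgroup P G" "card P = p ^ k"
  shows "card (orbit G (conjugation G) P) mod p = 1"
proof -
  let ?E = "{H. H \<subseteq> carrier G}" and ?S = "orbit G (conjugation G) P"
  have act: "group_action G ?E (conjugation G)" by (rule action_by_conjugation_on_power_set)
  interpret P: group_action "G\<lparr>carrier := P\<rparr>" ?E "conjugation G"
    using group_action.induced_action[OF act P(1)] .
  have PE: "P \<in> ?E" using P(1) subgroup.subset by blast
  have SE: "?S \<subseteq> ?E" using group_action.element_image[OF act] PE unfolding orbit_def by blast
  have invariant: "conjugation G h Q \<in> ?S" if "h \<in> P" and "Q \<in> ?S" for h Q
  proof -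
    obtain g where g: "g \<in> carrier G" "Q = conjugation G g P" using \<open>Q \<in> ?S\<close> unfolding orbit_def by blast
    have "h \<in> carrier G" using \<open>h \<in> P\<close> PE by blast
    then have "conjugation G h Q = conjugation G (h \<otimes> g) P"
      using group_action.composition_rule[OF act PE _ g(1)] g(2) by simp
    then show ?thesis unfolding orbit_def using \<open>h \<in> carrier G\<close> g(1) by blast
  qed
  have fixed: "{Q \<in> ?S. \<forall>h\<in>P. conjugation G h Q = Q} = {P}"
  proof (intro equalityI subsetI)
    fix Q assume "Q \<in> {Q \<in> ?S. \<forall>h\<in>P. conjugation G h Q = Q}"
    then obtain g where g: "g \<in> carrier G" "Q = conjugation G g P" and stable: "\<forall>h\<in>P. conjugation G h Q = Q"
      unfolding orbit_def by blast
    have Q: "subgroup Q G" "card Q = p ^ k" using conjugate_subgroup[OF g(1) P(1)] g(2) P(2) by simp_all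
    have "P \<subseteq> normalizer G Q"
      using stable PE Q(1) subgroup.subset unfolding normalizer_def stabilizer_def by blast
    then have "P \<subseteq> Q"
      using subset_sylow_if_subset_normalizer[OF ord _ \<open>coprime p m\<close> P Q] prime_gt_0_nat \<open>prime p\<close>
      by blast
    then show "Q \<in> {P}" using card_subset_eq Q fin subgroup.subset finite_subset P(2) by (metis singletonI)
  next
    fix Q assume "Q \<in> {P}"
    then show "Q \<in> {Q \<in> ?S. \<forall>h\<in>P. conjugation G h Q = Q}"
      using subgroup_subset_normalizer[OF P(1)] group_action.orbit_refl[OF act PE]
      unfolding normalizer_def stabilizer_def by blast
  qed
  have "card ?S mod p = card {Q \<in> ?S. \<forall>h\<in>P. conjugation G h Q = Q} mod p"
    using P.card_invariant_subset_cong_fixed_points[OF _ _ \<open>prime p\<close> SE] invariant fin P(2)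
    by (simp add: order_def)
  then show ?thesis using fixed prime_gt_1_nat[OF \<open>prime p\<close>] by simp
qed

lemma (in group) sylow_normal_or_self_normalizing:
  assumes fin: "finite (carrier G)" and ord: "order G = m * p ^ k" and "prime p" and "coprime p m"
    and P: "subgroup P G" "card P = p ^ k"
    and least: "\<forall>r. prime r \<and> r dvd m \<longrightarrow> q \<le> r" and "m < p * q"
  shows "P \<lhd> G \<or> normalizer G P = P"
proof -
  let ?S = "orbit G (conjugation G) P" and ?N = "normalizer G P"
  have PN: "P \<subseteq> ?N" using subgroup_subset_normalizer[OF P(1)] .
  interpret N: group "G\<lparr>carrier := ?N\<rparr>"
    using normalizer_imp_subgroup P(1) subgroup.subset subgroup_imp_group by blast
  define d where "d = card (rcosets\<^bsub>G\<lparr>carrier := ?N\<rparr>\<^esub> P)"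
  have card_N: "d * card P = card ?N"
    using N.lagrange normal_imp_subgroup[OF subgroup_in_normalizer[OF P(1)]] by (simp add: d_def order_def)
  have "card ?S * card ?N = order G"
    using card_conjugation_orbit_mult_card_normalizer P(1) subgroup.subset by blast
  then have "card ?S * d * p ^ k = m * p ^ k" using card_N P(2) ord by (simp add: mult.assoc)
  then have index: "card ?S * d = m" using prime_gt_0_nat[OF \<open>prime p\<close>] by simp
  have "card ?S mod p = 1" using card_sylow_conjugates_mod_prime[OF fin ord \<open>prime p\<close> \<open>coprime p m\<close> P] .
  then have "card ?S = 1 \<or> p < card ?S"
    using mod_less[of "card ?S" p] by (cases "card ?S" p rule: linorder_cases) auto
  then show ?thesis
  proof
    assume "card ?S = 1"
    moreover have "P \<in> ?S"
      using group_action.orbit_refl[OF action_by_conjugation_on_power_set] P(1) subgroup.subset by blast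
    ultimately have "?S = {P}" by (auto simp: card_1_singleton_iff)
    then show ?thesis using normal_if_conjugation_orbit_singleton P(1) by blast
  next
    assume "p < card ?S"
    have "d < q"
    proof (rule ccontr)
      assume "\<not> d < q"
      then have "p * q \<le> card ?S * d" using \<open>p < card ?S\<close> by (simp add: mult_le_mono)
      then show False using index \<open>m < p * q\<close> by simp
    qed
    moreover have "d dvd m" using index dvd_triv_right by blast
    moreover have "m > 0" using fin ord order_gt_0_iff_finite by (cases m) auto
    ultimately have "d = 1" using dvd_less_least_prime_divisor_eq_1[OF _ _ least] by blast
    then have "card P = card ?N" using card_N by simp
    moreover have "finite ?N"
      using fin finite_subset subgroup.subset[OF normalizer_imp_subgroup[OF subgroup.subset[OF P(1)]]] by blast
    ultimately show ?thesis using card_subset_eq[OF _ PN] by simp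
  qed
qed

theorem lemma1:
  fixes G (structure) and p k m q :: nat and P :: "'a set"
  assumes "group G" and "finite (carrier G)"
    and "order G = m * p ^ k"
    and "prime p" and "k \<ge> 1"
    and "prime q" and "q dvd m" and "\<forall>r. prime r \<and> r dvd m \<longrightarrow> q \<le> r"
    and "real m / real q < real p" and "p < m"
    and "sylow_subgroup G p P"
  shows "P \<lhd> G \<or> normalizer G P = P"
proof -
  interpret group G by (rule assms(1))
  have "real m < real p * real q"
    using assms(9) prime_gt_0_nat[OF assms(6)] by (simp add: divide_less_eq)
  then have "m < p * q" by (simp flip: of_nat_mult)
  have "\<not> p dvd m"
  proof
    assume "p dvd m"
    then obtain t where "m = p * t" by blast
    then have "t < q" and "t dvd m" using \<open>m < p * q\<close> by simp_all
    then have "t = 1" using dvd_less_least_prime_divisor_eq_1 assms(8,10) by simp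
    then show False using \<open>m = p * t\<close> assms(10) by simp
  qed
  then have "multiplicity p (order G) = k"
    using assms(3,4,10) by (simp add: prime_elem_multiplicity_mult_distrib not_dvd_imp_multiplicity_0
        multiplicity_prime_power)
  then have "subgroup P G" and "card P = p ^ k" using assms(11) unfolding sylow_subgroup_def by auto
  then show ?thesis
    using sylow_normal_or_self_normalizing[OF assms(2,3,4) _ _ _ assms(8) \<open>m < p * q\<close>]
      \<open>\<not> p dvd m\<close> assms(4) prime_imp_coprime by blast
qed

end
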